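(* Let $\{r_n\}_{n\ge1}$ be a sequence of positive odd integers. For every $n\in\mathbb{N}$, $$\mathcal{L}\left(\{x\in\mathbb{I}\colon y_1(x)\le\tfrac{1}{r_1},\ y_2(x)\le\tfrac1{r_2},\dots,y_n(x)\le\tfrac1{r_n}\}\right)=\frac{1}{r_1r_2\cdots r_n}.$$
   Context: $\mathcal{L}$ is Lebesgue measure, $\mathbb{I}=(0,1)\setminus\mathbb{Q}$. Define $T\colon[0,1)\to[0,1)$ by: for $k\in\mathbb{N}$, $Tx=\lceil 1/x\rceil x-1$ if $x\in(\frac{1}{2k},\frac{1}{2k-1})$; $Tx=1-\lfloor 1/x\rfloor x$ if $x\in(\frac{1}{2k+1},\frac{1}{2k})$; $Tx=0$ if $x\in\{0\}\cup\{1/n\colon n\ge 2\}$. For $x\in(0,1)$ define $d_1(x)=\lceil 1/x\rceil$, $s_1(x)=1$ if $x\in[\frac{1}{2k},\frac{1}{2k-1})$ for some $k$, and $d_1(x)=\lfloor 1/x\rfloor$, $s_1(x)=-1$ if $x\in[\frac{1}{2k+1},\frac{1}{2k})$ for some $k$; $d_{n+1}(x)=d_1(T^nx)$, $s_{n+1}(x)=s_1(T^nx)$, $\epsilon_1(x)=1$, $\epsilon_{n+1}(x)=\prod_{k=1}^ns_k(x)$. For $x\in\mathbb{I}$ define $y_1(x)=x$ and, for $n\ge2$, $y_n(x)=(d_{n-1}(x)-1)T^{n-1}x$ if $\epsilon_n(x)=\epsilon_{n-1}(x)$, and $y_n(x)=(d_{n-1}(x)+1)T^{n-1}x$ if $\epsilon_n(x)=-\epsilon_{n-1}(x)$.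 *)

theory Defs
  imports "HOL-Analysis.Analysis"
begin

definition Irr :: "real set" where
  "Irr = {0<..<1} - \<rat>"

definition TT :: "real \<Rightarrow> real" where
  "TT x = (if x = 0 \<or> (\<exists>n::nat. n \<ge> 2 \<and> x = 1 / real n) then 0
    else if (\<exists>k::nat. k \<ge> 1 \<and> x \<in> {1 / (2 * real k)<..<1 / (2 * real k - 1)})
      then of_int \<lceil>1 / x\<rceil> * x - 1
    else if (\<exists>k::nat. k \<ge> 1 \<and> x \<in> {1 / (2 * real k + 1)<..<1 / (2 * real k)})
      then 1 - of_int \<lfloor>1 / x\<rfloor> * x
    else 0)"

definition d1 :: "real \<Rightarrow> int" where
  "d1 x = (if (\<exists>k::nat. k \<ge> 1 \<and> x \<in> {1 / (2 * real k)..<1 / (2 * real k - 1)})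
      then \<lceil>1 / x\<rceil> else \<lfloor>1 / x\<rfloor>)"

definition s1 :: "real \<Rightarrow> int" where
  "s1 x = (if (\<exists>k::nat. k \<ge> 1 \<and> x \<in> {1 / (2 * real k)..<1 / (2 * real k - 1)})
      then 1 else -1)"

text \<open>Digits indexed from 1: dd n x = d_n(x), ss n x = s_n(x) for n \<ge> 1.\<close>
definition dd :: "nat \<Rightarrow> real \<Rightarrow> int" where
  "dd n x = d1 ((TT ^^ (n - 1)) x)"

definition ss :: "nat \<Rightarrow> real \<Rightarrow> int" where
  "ss n x = s1 ((TT ^^ (n - 1)) x)"

definition eps :: "nat \<Rightarrow> real \<Rightarrow> int" where
  "eps n x = (\<Prod>k\<in>{1..<n}. ss k x)"

definition yy :: "nat \<Rightarrow> real \<Rightarrow> real" where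
  "yy n x = (if n \<le> 1 then x
     else if eps n x = eps (n - 1) x
       then (of_int (dd (n - 1) x) - 1) * (TT ^^ (n - 1)) x
       else (of_int (dd (n - 1) x) + 1) * (TT ^^ (n - 1)) x)"

end

theory Submission
  imports Defs
begin

(* For irrational w with m = floor (1/w), let e and o be the even and the odd member
   of {m, m + 1}. On (1/(m+1), 1/m) the map T is affine, T w = +-(e w - 1), with image (0, 1/o),
   and d_1(w) - s_1(w) = o; hence y_(k+1)(x) is T^k x times the number o belonging to T^(k-1) x.
   Generalise the set of the theorem to the cylinder of all w < 1/c with c w <= 1/a_1 and the
   subsequent y-values bounded by 1/a_2, ..., 1/a_k, the factor c replacing the initial factor 1.
   The first condition says m >= N := c a_1, and the part with first digit m is the image of the
   cylinder for (o; a_2, ..., a_k) under the inverse branch of slope +-1/e. Since e o = m (m + 1),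
   induction on k and the telescoping sum of 1/(m (m + 1)) over m >= N, which is 1/N, give the
   measure 1/(c a_1 ... a_k). *)

definition even_nbr :: "nat \<Rightarrow> nat" where
  "even_nbr m = (if odd m then m + 1 else m)"

definition odd_nbr :: "nat \<Rightarrow> nat" where
  "odd_nbr m = (if odd m then m else m + 1)"

definition branch_sign :: "nat \<Rightarrow> int" where
  "branch_sign m = (if odd m then 1 else -1)"

definition inverse_branch :: "nat \<Rightarrow> real \<Rightarrow> real" where
  "inverse_branch m v = (of_int (branch_sign m) * v + 1) / real (even_nbr m)"

lemma odd_nbr_ge_1: "odd_nbr m \<ge> 1"
  by (simp add: odd_nbr_def odd_pos Suc_le_eq)

lemma even_nbr_times_odd_nbr: "real (even_nbr m) * real (odd_nbr m) = real m * (real m + 1)"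
  by (simp add: even_nbr_def odd_nbr_def)

lemma Irr_iff: "w \<in> Irr \<longleftrightarrow> 0 < w \<and> w < 1 \<and> w \<notin> \<rat>"
  by (auto simp: Irr_def)

lemma floor_inverse_Irr:
  assumes "w \<in> Irr"
  shows "1 \<le> nat \<lfloor>1 / w\<rfloor>"
    and "real (nat \<lfloor>1 / w\<rfloor>) < 1 / w" "1 / w < real (nat \<lfloor>1 / w\<rfloor>) + 1"
proof -
  have w: "1 \<le> 1 / w" "1 / w \<notin> \<rat>"
    using assms by (simp add: Irr_iff, simp add: Irr_iff flip: inverse_eq_divide)
  have floor: "1 \<le> \<lfloor>1 / w\<rfloor>"
    using w(1) by simp
  then show "1 \<le> nat \<lfloor>1 / w\<rfloor>"
    by (metis nat_mono nat_one_as_int)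
  have "real (nat \<lfloor>1 / w\<rfloor>) = of_int \<lfloor>1 / w\<rfloor>"
    using floor by (intro of_nat_nat) linarith
  moreover have "of_int \<lfloor>1 / w\<rfloor> \<noteq> 1 / w"
    using w(2) by (metis Rats_of_int)
  ultimately show "real (nat \<lfloor>1 / w\<rfloor>) < 1 / w" "1 / w < real (nat \<lfloor>1 / w\<rfloor>) + 1"
    by (auto simp: order_le_neq_trans)
qed

lemma Irr_mem_interval_iff:
  assumes "w \<in> Irr" "j \<ge> 1"
  shows "w \<in> {1 / (real j + 1)<..<1 / real j} \<longleftrightarrow> nat \<lfloor>1 / w\<rfloor> = j"
    and "w \<in> {1 / (real j + 1)..<1 / real j} \<longleftrightarrow> nat \<lfloor>1 / w\<rfloor> = j"
proof -
  have w: "0 < w" "w \<noteq> 1 / (real j + 1)"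
    using assms(1) by (auto simp: Irr_iff)
  have "w \<in> {1 / (real j + 1)<..<1 / real j} \<longleftrightarrow> real j < 1 / w \<and> 1 / w < real j + 1"
    using w assms(2) by (auto simp: field_simps)
  also have "\<dots> \<longleftrightarrow> nat \<lfloor>1 / w\<rfloor> = j"
    using floor_inverse_Irr[OF assms(1)] by linarith
  finally show "w \<in> {1 / (real j + 1)<..<1 / real j} \<longleftrightarrow> nat \<lfloor>1 / w\<rfloor> = j" .
  then show "w \<in> {1 / (real j + 1)..<1 / real j} \<longleftrightarrow> nat \<lfloor>1 / w\<rfloor> = j"
    using w(2) by auto
qed

lemma Irr_parity_intervals:
  assumes "w \<in> Irr"
  shows "(\<exists>k::nat. k \<ge> 1 \<and> w \<in> {1 / (2 * real k)..<1 / (2 * real k - 1)}) \<longleftrightarrow> odd (nat \<lfloor>1 / w\<rfloor>)"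
    and "(\<exists>k::nat. k \<ge> 1 \<and> w \<in> {1 / (2 * real k)<..<1 / (2 * real k - 1)}) \<longleftrightarrow> odd (nat \<lfloor>1 / w\<rfloor>)"
    and "(\<exists>k::nat. k \<ge> 1 \<and> w \<in> {1 / (2 * real k + 1)<..<1 / (2 * real k)}) \<longleftrightarrow> even (nat \<lfloor>1 / w\<rfloor>)"
proof -
  define m where "m = nat \<lfloor>1 / w\<rfloor>"
  have "m \<ge> 1"
    using floor_inverse_Irr(1)[OF assms] by (simp add: m_def)
  have odd_iff: "odd m \<longleftrightarrow> (\<exists>k::nat. k \<ge> 1 \<and> m = 2 * k - 1)"
    using \<open>m \<ge> 1\<close> by (auto elim!: oddE intro!: exI[of _ "Suc (m div 2)"])
  have even_iff: "even m \<longleftrightarrow> (\<exists>k::nat. k \<ge> 1 \<and> m = 2 * k)"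
    using \<open>m \<ge> 1\<close> by (auto elim!: evenE)
  have "w \<in> {1 / (2 * real k)..<1 / (2 * real k - 1)} \<longleftrightarrow> m = 2 * k - 1"
       "w \<in> {1 / (2 * real k)<..<1 / (2 * real k - 1)} \<longleftrightarrow> m = 2 * k - 1"
    if "k \<ge> 1" for k
    using Irr_mem_interval_iff[OF assms, of "2 * k - 1"] that by (simp_all add: m_def)
  moreover have "w \<in> {1 / (2 * real k + 1)<..<1 / (2 * real k)} \<longleftrightarrow> m = 2 * k" if "k \<ge> 1" for k
    using Irr_mem_interval_iff(1)[OF assms, of "2 * k"] that by (simp add: m_def)
  ultimately show
    "(\<exists>k::nat. k \<ge> 1 \<and> w \<in> {1 / (2 * real k)..<1 / (2 * real k - 1)}) \<longleftrightarrow> odd (nat \<lfloor>1 / w\<rfloor>)"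
    "(\<exists>k::nat. k \<ge> 1 \<and> w \<in> {1 / (2 * real k)<..<1 / (2 * real k - 1)}) \<longleftrightarrow> odd (nat \<lfloor>1 / w\<rfloor>)"
    "(\<exists>k::nat. k \<ge> 1 \<and> w \<in> {1 / (2 * real k + 1)<..<1 / (2 * real k)}) \<longleftrightarrow> even (nat \<lfloor>1 / w\<rfloor>)"
    unfolding m_def[symmetric] using odd_iff even_iff by blast+
qed

lemma d1_s1_TT_Irr:
  assumes "w \<in> Irr"
  defines "m \<equiv> nat \<lfloor>1 / w\<rfloor>"
  shows "d1 w = int (even_nbr m)" and "s1 w = branch_sign m"
    and "TT w = of_int (branch_sign m) * (real (even_nbr m) * w - 1)"
proof -
  note parity = Irr_parity_intervals[OF assms(1), folded m_def]
  have m: "real m < 1 / w" "1 / w < real m + 1"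
    using floor_inverse_Irr[OF assms(1)] by (simp_all add: m_def)
  have floor: "\<lfloor>1 / w\<rfloor> = int m"
    using m by (simp add: floor_eq_iff)
  have ceiling: "\<lceil>1 / w\<rceil> = int m + 1"
    using m by (simp add: ceiling_eq_iff)
  have not_special: "w \<noteq> 0 \<and> \<not> (\<exists>n::nat. n \<ge> 2 \<and> w = 1 / real n)"
    using assms(1) by (auto simp: Irr_iff)
  show "d1 w = int (even_nbr m)" "s1 w = branch_sign m"
    using parity floor ceiling by (auto simp: d1_def s1_def even_nbr_def branch_sign_def)
  show "TT w = of_int (branch_sign m) * (real (even_nbr m) * w - 1)"
    using parity floor ceiling not_special by (auto simp: TT_def even_nbr_def branch_sign_def)
qed

lemma inverse_branch_TT:
  assumes "w \<in> Irr"
  shows "inverse_branch (nat \<lfloor>1 / w\<rfloor>) (TT w) = w"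
  using d1_s1_TT_Irr(3)[OF assms] floor_inverse_Irr(1)[OF assms]
  by (auto simp: inverse_branch_def branch_sign_def even_nbr_def)

lemma inverse_branch_mem_interval_iff:
  assumes "m \<ge> 1"
  shows "inverse_branch m v \<in> {1 / (real m + 1)<..<1 / real m} \<longleftrightarrow> v \<in> {0<..<1 / real (odd_nbr m)}"
proof (cases "odd m")
  case True
  then have branch: "inverse_branch m v = (v + 1) / (real m + 1)"
    by (simp add: inverse_branch_def branch_sign_def even_nbr_def)
  show ?thesis
    unfolding branch using True assms by (auto simp: odd_nbr_def field_simps)
next
  case False
  then have branch: "inverse_branch m v = (1 - v) / real m"
    by (simp add: inverse_branch_def branch_sign_def even_nbr_def)
  show ?thesis
    unfolding branch using False assms by (auto simp: odd_nbr_def field_simps zero_less_mult_iff)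
qed

lemma inverse_branch_Rats_iff:
  assumes "m \<ge> 1"
  shows "inverse_branch m v \<in> \<rat> \<longleftrightarrow> v \<in> \<rat>"
proof -
  have "v = of_int (branch_sign m) * (real (even_nbr m) * inverse_branch m v - 1)"
    using assms by (auto simp: inverse_branch_def branch_sign_def even_nbr_def)
  then show ?thesis
    by (metis Rats_add Rats_diff Rats_divide Rats_mult Rats_of_int Rats_of_nat Rats_1
        inverse_branch_def)
qed

lemma inverse_branch_Irr_iff:
  assumes "m \<ge> 1"
  shows "inverse_branch m v \<in> Irr \<and> nat \<lfloor>1 / inverse_branch m v\<rfloor> = m
           \<longleftrightarrow> v \<in> Irr \<and> v < 1 / real (odd_nbr m)"
proof -
  define w where "w = inverse_branch m v"
  have "0 < 1 / (real m + 1)" "1 / real m \<le> 1"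
    using assms by simp_all
  then have unit_interval: "{1 / (real m + 1)<..<1 / real m} \<subseteq> {0<..<1}"
    by (smt (verit) greaterThanLessThan_iff subsetI)
  have "w \<in> Irr \<and> nat \<lfloor>1 / w\<rfloor> = m
          \<longleftrightarrow> w \<in> {1 / (real m + 1)<..<1 / real m} \<and> w \<notin> \<rat>"
    using Irr_mem_interval_iff(1)[of w m] assms unit_interval by (auto simp: Irr_iff)
  also have "\<dots> \<longleftrightarrow> v \<in> {0<..<1 / real (odd_nbr m)} \<and> v \<notin> \<rat>"
    unfolding w_def inverse_branch_mem_interval_iff[OF assms] inverse_branch_Rats_iff[OF assms] ..
  also have "\<dots> \<longleftrightarrow> v \<in> Irr \<and> v < 1 / real (odd_nbr m)"
    using assms order_less_le_trans[of v "1 / real (odd_nbr m)" 1] by (auto simp: Irr_iff odd_nbr_def)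
  finally show ?thesis
    unfolding w_def .
qed

lemma TT_Irr:
  assumes "w \<in> Irr"
  shows "TT w \<in> Irr" and "TT w < 1 / real (odd_nbr (nat \<lfloor>1 / w\<rfloor>))"
  using inverse_branch_Irr_iff[OF floor_inverse_Irr(1)[OF assms], of "TT w"]
  by (simp_all add: inverse_branch_TT assms)

lemma TT_inverse_branch:
  assumes "m \<ge> 1" "v \<in> Irr" "v < 1 / real (odd_nbr m)"
  shows "TT (inverse_branch m v) = v"
proof -
  have w: "inverse_branch m v \<in> Irr" "nat \<lfloor>1 / inverse_branch m v\<rfloor> = m"
    using inverse_branch_Irr_iff[OF assms(1)] assms(2,3) by blast+
  show ?thesis
    using d1_s1_TT_Irr(3)[OF w(1)] assms(1) unfolding w(2)
    by (auto simp: inverse_branch_def branch_sign_def even_nbr_def)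
qed

lemma TT_funpow_Irr: "x \<in> Irr \<Longrightarrow> (TT ^^ k) x \<in> Irr"
  by (induction k) (simp_all add: TT_Irr)

lemma yy_Suc_Suc: "yy (Suc (Suc k)) x = of_int (dd (Suc k) x - ss (Suc k) x) * (TT ^^ Suc k) x"
proof -
  have sign: "ss (Suc k) x = 1 \<or> ss (Suc k) x = -1"
    by (simp add: ss_def s1_def)
  have "eps (Suc (Suc k)) x = eps (Suc k) x * ss (Suc k) x"
    by (simp add: eps_def)
  moreover have "eps (Suc k) x \<noteq> 0"
    using sign by (auto simp: eps_def ss_def s1_def)
  ultimately have "eps (Suc (Suc k)) x = eps (Suc k) x \<longleftrightarrow> ss (Suc k) x = 1"
    by simp
  then show ?thesis
    using sign by (auto simp: yy_def)
qed

(* The parameter c stands for the factor d - s contributed by the preceding digit. *)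
fun scaled_y :: "nat \<Rightarrow> nat \<Rightarrow> real \<Rightarrow> real" where
  "scaled_y c 0 w = real c * w"
| "scaled_y c (Suc k) w = scaled_y (odd_nbr (nat \<lfloor>1 / w\<rfloor>)) k (TT w)"

lemma scaled_y_Suc:
  "scaled_y c (Suc k) w = real (odd_nbr (nat \<lfloor>1 / (TT ^^ k) w\<rfloor>)) * (TT ^^ Suc k) w"
  by (induction k arbitrary: c w) (simp_all del: funpow.simps add: funpow_Suc_right)

lemma yy_eq_scaled_y:
  assumes "x \<in> Irr"
  shows "yy (Suc k) x = scaled_y 1 k x"
proof (cases k)
  case 0
  then show ?thesis by (simp add: yy_def)
next
  case (Suc j)
  have "dd (Suc j) x - ss (Suc j) x = int (odd_nbr (nat \<lfloor>1 / (TT ^^ j) x\<rfloor>))"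
    using d1_s1_TT_Irr(1,2)[OF TT_funpow_Irr[OF assms]]
    by (simp add: dd_def ss_def even_nbr_def odd_nbr_def branch_sign_def)
  then show ?thesis
    unfolding Suc yy_Suc_Suc scaled_y_Suc by simp
qed

definition y_cylinder :: "nat \<Rightarrow> nat list \<Rightarrow> real set" where
  "y_cylinder c as = {w \<in> Irr. w < 1 / real c \<and> (\<forall>k < length as. scaled_y c k w \<le> 1 / real (as ! k))}"

lemma y_cylinder_Nil:
  assumes "c \<ge> 1"
  shows "y_cylinder c [] = {0<..<1 / real c} - \<rat>"
proof -
  have "1 / real c \<le> 1"
    using assms by simp
  then show ?thesis
    by (auto simp: y_cylinder_def Irr_iff dest: order_less_le_trans)
qed

lemma y_cylinder_Cons:
  "y_cylinder c (a # as) =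
     {w \<in> Irr. w < 1 / real c \<and> real c * w \<le> 1 / real a \<and>
        TT w \<in> y_cylinder (odd_nbr (nat \<lfloor>1 / w\<rfloor>)) as}"
  by (auto simp: y_cylinder_def All_less_Suc2 TT_Irr)

lemma Irr_le_inverse_iff:
  assumes "w \<in> Irr" "N \<ge> 1"
  shows "w \<le> 1 / real N \<longleftrightarrow> N \<le> nat \<lfloor>1 / w\<rfloor>"
proof -
  have "w \<le> 1 / real N \<longleftrightarrow> real N \<le> 1 / w"
    using assms by (auto simp: Irr_iff field_simps)
  also have "\<dots> \<longleftrightarrow> N \<le> nat \<lfloor>1 / w\<rfloor>"
    using floor_inverse_Irr[OF assms(1)] by (auto simp: le_nat_floor)
  finally show ?thesis .
qed

lemma y_cylinder_Cons_eq_UN: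
  assumes "c \<ge> 1" "a \<ge> 1"
  shows "y_cylinder c (a # as) =
           (\<Union>j. inverse_branch (c * a + j) ` y_cylinder (odd_nbr (c * a + j)) as)"
proof -
  have first_digit:
    "w < 1 / real c \<and> real c * w \<le> 1 / real a \<longleftrightarrow> c * a \<le> nat \<lfloor>1 / w\<rfloor>"
    if "w \<in> Irr" for w
  proof -
    have "w \<noteq> 1 / real c"
      using that by (auto simp: Irr_iff)
    moreover have "1 / real (c * a) \<le> 1 / real c"
      using assms by (simp add: frac_le)
    moreover have "real c * w \<le> 1 / real a \<longleftrightarrow> w \<le> 1 / real (c * a)"
      using assms by (simp add: field_simps)
    ultimately have "w < 1 / real c \<and> real c * w \<le> 1 / real a \<longleftrightarrow> w \<le> 1 / real (c * a)"
      by auto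
    also have "\<dots> \<longleftrightarrow> c * a \<le> nat \<lfloor>1 / w\<rfloor>"
      by (rule Irr_le_inverse_iff[OF that]) (use assms in simp)
    finally show ?thesis .
  qed
  show ?thesis
  proof (intro set_eqI iffI)
    fix w
    assume w: "w \<in> y_cylinder c (a # as)"
    define m where "m = nat \<lfloor>1 / w\<rfloor>"
    have "w \<in> Irr" "c * a \<le> m" "TT w \<in> y_cylinder (odd_nbr m) as"
      using w first_digit by (auto simp: y_cylinder_Cons m_def)
    moreover have "w = inverse_branch m (TT w)"
      using inverse_branch_TT[OF \<open>w \<in> Irr\<close>] by (simp add: m_def)
    ultimately show "w \<in> (\<Union>j. inverse_branch (c * a + j) ` y_cylinder (odd_nbr (c * a + j)) as)"
      by (auto intro!: exI[of _ "m - c * a"])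
  next
    fix w
    assume "w \<in> (\<Union>j. inverse_branch (c * a + j) ` y_cylinder (odd_nbr (c * a + j)) as)"
    then obtain j v where v: "v \<in> y_cylinder (odd_nbr (c * a + j)) as"
      and w: "w = inverse_branch (c * a + j) v"
      by blast
    define m where "m = c * a + j"
    have "c * a \<le> m" "m \<ge> 1"
      using assms by (simp_all add: m_def trans_le_add1)
    have v_Irr: "v \<in> Irr" "v < 1 / real (odd_nbr m)"
      using v by (simp_all add: y_cylinder_def m_def)
    then have "w \<in> Irr" "nat \<lfloor>1 / w\<rfloor> = m"
      using inverse_branch_Irr_iff[OF \<open>m \<ge> 1\<close>, of v] by (simp_all add: w m_def)
    moreover have "TT w = v"
      using TT_inverse_branch[OF \<open>m \<ge> 1\<close> v_Irr] by (simp add: w m_def)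
    ultimately show "w \<in> y_cylinder c (a # as)"
      using first_digit \<open>c * a \<le> m\<close> v by (simp add: y_cylinder_Cons m_def)
  qed
qed

lemma disjoint_family_inverse_branch_images:
  assumes "N \<ge> 1" "\<And>m. A m \<subseteq> {v \<in> Irr. v < 1 / real (odd_nbr m)}"
  shows "disjoint_family (\<lambda>j. inverse_branch (N + j) ` A (N + j))"
proof -
  have "nat \<lfloor>1 / w\<rfloor> = N + j" if "w \<in> inverse_branch (N + j) ` A (N + j)" for w j
    using that assms inverse_branch_Irr_iff[of "N + j"] by fastforce
  then show ?thesis
    unfolding disjoint_family_on_def by (metis add_left_cancel disjoint_iff)
qed

lemma inverse_branch_image_lebesgue:
  assumes "m \<ge> 1" "S \<in> sets lebesgue"
  shows "inverse_branch m ` S \<in> sets lebesgue"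
    and "emeasure lebesgue (inverse_branch m ` S) = ennreal (1 / real (even_nbr m)) * emeasure lebesgue S"
proof -
  have affine: "inverse_branch m =
      (\<lambda>x. (of_int (branch_sign m) / real (even_nbr m)) *\<^sub>R x + 1 / real (even_nbr m))"
    by (auto simp: fun_eq_iff inverse_branch_def add_divide_distrib)
  show "inverse_branch m ` S \<in> sets lebesgue"
    unfolding affine
    by (rule differentiable_image_in_sets_lebesgue[OF assms(2) order_refl]) (intro derivative_intros)
  have "\<bar>real_of_int (branch_sign m)\<bar> = 1"
    by (simp add: branch_sign_def)
  then show "emeasure lebesgue (inverse_branch m ` S) = ennreal (1 / real (even_nbr m)) * emeasure lebesgue S"
    unfolding affine emeasure_lebesgue_affine by simp
qed

lemma null_sets_lebesgue_Rats: "\<rat> \<in> null_sets lebesgue"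
  using countable_imp_null_set_lborel[OF countable_rat] by (rule null_sets_completionI)

lemma sets_lebesgue_y_cylinder:
  "c \<ge> 1 \<Longrightarrow> \<forall>a \<in> set as. a \<ge> 1 \<Longrightarrow> y_cylinder c as \<in> sets lebesgue"
proof (induction as arbitrary: c)
  case Nil
  then show ?case
    using null_sets_lebesgue_Rats by (auto simp: y_cylinder_Nil)
next
  case (Cons a as)
  then show ?case
    using odd_nbr_ge_1
    by (auto simp: y_cylinder_Cons_eq_UN trans_le_add1
        intro!: sets.countable_UN inverse_branch_image_lebesgue)
qed

lemma sums_inverse_consecutive_products:
  assumes "N \<ge> 1"
  shows "(\<lambda>j. 1 / (real (N + j) * (real (N + j) + 1))) sums (1 / real N)"
proof -
  have "(\<lambda>j. 1 / real (N + j)) \<longlonglongrightarrow> 0"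
    using LIMSEQ_ignore_initial_segment[OF lim_const_over_n[of 1], of N] by (simp add: add.commute)
  from telescope_sums'[OF this] have "(\<lambda>j. 1 / real (N + j) - 1 / real (N + Suc j)) sums (1 / real N)"
    by simp
  moreover have "1 / real (N + j) - 1 / real (N + Suc j) = 1 / (real (N + j) * (real (N + j) + 1))" for j
    using assms by (simp add: field_simps)
  ultimately show ?thesis
    by simp
qed

lemma emeasure_y_cylinder:
  "c \<ge> 1 \<Longrightarrow> \<forall>a \<in> set as. a \<ge> 1 \<Longrightarrow>
     emeasure lebesgue (y_cylinder c as) = ennreal (1 / (real c * prod_list (map real as)))"
proof (induction as arbitrary: c)
  case Nil
  have "emeasure lebesgue ({0<..<1 / real c} - \<rat>) = emeasure lebesgue {0<..<1 / real c}"
    by (rule emeasure_Diff_null_set[OF null_sets_lebesgue_Rats]) simp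
  then show ?case
    using Nil by (simp add: y_cylinder_Nil)
next
  case (Cons a as)
  define N where "N = c * a"
  define P where "P = prod_list (map real as)"
  define F where "F j = inverse_branch (N + j) ` y_cylinder (odd_nbr (N + j)) as" for j
  have "N \<ge> 1"
    using Cons.prems by (simp add: N_def)
  have "P > 0"
    using Cons.prems unfolding P_def by (induction as) auto
  have F: "F j \<in> sets lebesgue"
      "emeasure lebesgue (F j) = ennreal (1 / (real (N + j) * (real (N + j) + 1)) * (1 / P))" for j
  proof -
    have "N + j \<ge> 1" "y_cylinder (odd_nbr (N + j)) as \<in> sets lebesgue"
      using \<open>N \<ge> 1\<close> Cons.prems odd_nbr_ge_1 by (simp_all add: sets_lebesgue_y_cylinder)
    note image = inverse_branch_image_lebesgue[OF this]
    show "F j \<in> sets lebesgue"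
      using image(1) by (simp add: F_def)
    have "emeasure lebesgue (F j)
            = ennreal (1 / real (even_nbr (N + j))) * ennreal (1 / (real (odd_nbr (N + j)) * P))"
      using image(2) Cons.IH[OF odd_nbr_ge_1] Cons.prems by (simp add: F_def P_def)
    also have "\<dots> = ennreal (1 / (real (even_nbr (N + j)) * real (odd_nbr (N + j))) * (1 / P))"
      using \<open>P > 0\<close> by (simp add: ennreal_mult[symmetric])
    finally show "emeasure lebesgue (F j) = ennreal (1 / (real (N + j) * (real (N + j) + 1)) * (1 / P))"
      by (simp only: even_nbr_times_odd_nbr)
  qed
  have UN: "y_cylinder c (a # as) = (\<Union>j. F j)"
    using Cons.prems by (simp add: y_cylinder_Cons_eq_UN F_def N_def)
  have "disjoint_family F"
    unfolding F_def by (rule disjoint_family_inverse_branch_images[OF \<open>N \<ge> 1\<close>]) (auto simp: y_cylinder_def)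
  then have "emeasure lebesgue (y_cylinder c (a # as)) = (\<Sum>j. emeasure lebesgue (F j))"
    unfolding UN by (intro suminf_emeasure[symmetric]) (use F(1) in auto)
  also have "\<dots> = ennreal (1 / real N * (1 / P))"
    unfolding F(2) using \<open>P > 0\<close>
    by (intro suminf_ennreal_eq sums_mult2 sums_inverse_consecutive_products \<open>N \<ge> 1\<close>) simp
  finally show ?case
    by (simp add: N_def P_def mult.assoc)
qed

lemma y_conditions_eq_y_cylinder:
  "{x \<in> Irr. \<forall>i\<in>{1..n}. yy i x \<le> 1 / real (r i)} = y_cylinder 1 (map r [1..<Suc n])"
proof -
  have "(\<forall>i\<in>{1..n}. yy i x \<le> 1 / real (r i))
          \<longleftrightarrow> (\<forall>k<n. scaled_y 1 k x \<le> 1 / real (map r [1..<Suc n] ! k))"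
    if "x \<in> Irr" for x
    unfolding image_Suc_lessThan[symmetric] by (auto simp del: upt_Suc simp: yy_eq_scaled_y[OF that])
  then show ?thesis
    by (auto simp: y_cylinder_def Irr_iff simp del: upt_Suc)
qed

theorem lemma3p6:
  fixes r :: "nat \<Rightarrow> nat" and n :: nat
  assumes "\<And>i. i \<ge> 1 \<Longrightarrow> r i > 0 \<and> odd (r i)"
    and "n \<ge> 1"
  shows "emeasure lebesgue {x \<in> Irr. \<forall>i\<in>{1..n}. yy i x \<le> 1 / real (r i)}
           = ennreal (1 / (\<Prod>i\<in>{1..n}. real (r i)))"
proof -
  define as where "as = map r [1..<Suc n]"
  have "\<forall>a \<in> set as. a \<ge> 1"
    using assms(1) by (auto simp: as_def Suc_le_eq)
  moreover have "prod_list (map real as) = (\<Prod>i\<in>{1..n}. real (r i))"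
    using prod.distinct_set_conv_list[of "[1..<Suc n]" "\<lambda>i. real (r i)"]
    by (simp del: upt_Suc add: as_def atLeastLessThanSuc_atLeastAtMost comp_def)
  moreover have "{x \<in> Irr. \<forall>i\<in>{1..n}. yy i x \<le> 1 / real (r i)} = y_cylinder 1 as"
    unfolding as_def by (rule y_conditions_eq_y_cylinder)
  ultimately show ?thesis
    using emeasure_y_cylinder[of 1 as] by simp
qed

end
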